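(* Assume $\chi$ is weakly generic, and let $\sigma=\sigma_{a,b}$ be a Serre weight with $\mathcal{S}(\chi_1,\chi_2,\sigma)\neq\varnothing$. For $\tau\in\Sigma$ and $0\le j<e$ put $m_{\tau,j}=\Omega_{\tau,n}+j(p^f-1)$. Then for all $\tau\in\Sigma$, $1\le j<e$ and $0\le k<f''$: if $(m_{\tau,j},k)\in J^{\mathrm{AH}}_\sigma(\chi_1,\chi_2)$ then $(m_{\tau,j-1},k)\in J^{\mathrm{AH}}_\sigma(\chi_1,\chi_2)$.
   Context: Let $p$ be a prime and $K/\mathbf{Q}_p$ finite with residue field $k$, residue degree $f=[k:\mathbf{F}_p]$ and ramification index $e$; $I_K$ is inertia. Fix $\varpi\in\overline{K}$ with $\varpi^{p^f-1}$ a uniformiser; $\omega\colon G_K\to k^\times$ sends $g$ to the reduction of $g(\varpi)/\varpi$. $\Sigma=\mathrm{Hom}_{\mathbf{F}_p}(k,\overline{\mathbf{F}}_p)$, $\varphi(x)=x^p$ on $k$ (so $\Sigma=\{\tau\circ\varphi^i\}$), $\omega_\tau=\tau\circ\omega$, $\Omega_{\tau,a}=\sum_{i=0}^{f-1}p^ia_{\tau\circ\varphi^i}$ for $a\in\mathbf{Z}^\Sigma$. $\chi_1,\chi_2\colon G_K\to\overline{\mathbf{F}}_p^\times$ continuous, $\chi=\chi_1\chi_2^{-1}=\psi\prod_\tau\omega_\tau^{n_\tau}$, $\psi$ unramified, $n_\tau\in[1,p]$, some $n_\tau<p$ (this determines $n$). Weakly generic: $n_\tau\in[e,p-e]$ for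 all $\tau$. Serre weight $\sigma_{a,b}=\bigotimes_\tau(\det^{b_\tau}\otimes\mathrm{Sym}^{a_\tau-b_\tau}k^2)\otimes_{k,\tau}\overline{\mathbf{F}}_p$, $a_\tau-b_\tau\in[0,p-1]$; $r_\tau=a_\tau-b_\tau+1$. $\mathcal{S}(\chi_1,\chi_2,\sigma)$: pairs $(J,x)$, $J\subseteq\Sigma$, $x_\tau\in[0,e-1]$, with $\chi_1|_{I_K}=\prod_{\tau\in J}\omega_\tau^{a_\tau+1+x_\tau}\prod_{\tau\notin J}\omega_\tau^{b_\tau+x_\tau}$ and $\chi_2|_{I_K}=\prod_{\tau\notin J}\omega_\tau^{a_\tau+e-x_\tau}\prod_{\tau\in J}\omega_\tau^{b_\tau+e-1-x_\tau}$. $s(J,x)_\tau=r_\tau+x_\tau$ if $\tau\in J$, $x_\tau$ if $\tau\notin J$. Order: $(J,x)\preceq(J',x')$ iff $\Omega_{\tau,s(J',x')-s(J,x)}\in(p^f-1)\mathbf{Z}_{\ge0}$ for all $\tau$; a non-empty $\mathcal{S}$ has a unique maximal element $(J,x)$. $J^{\mathrm{AH}}_\sigma(\chi_1,\chi_2)$: let $f'$ be the least $i>0$ with $n_{\tau\circ\varphi^i}=n_\tau$ for all $\tau$, $f''=f/f'$. For $j\ge0$ let $W'_j$ be the set of integers $m$ with $\frac{jp(p^f-1)}{p-1}<m<\frac{(j+1)p(p^f-1)}{p-1}$, $p\nmid m$ and $m\equiv\Omega_{\tau,n}\pmod{p^f-1}$ for some $\tau$; $W'=\bigcup_{j=0}^{e-1}W'_j$,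 $W=W'\times\{0,\dots,f''-1\}$. For $m\in W'$ fix $\tau_m\in\Sigma$ with $m\equiv\Omega_{\tau_m,n}\pmod{p^f-1}$, and for $\alpha=(m,k)\in W$ put $\tau_\alpha=\tau_m\circ\varphi^{-kf'}$. With $(J,x)$ maximal in $\mathcal{S}$, $s=s(J,x)$, $t_\tau=a_\tau-b_\tau+e-s_\tau$, let $\mathcal{I}_\tau=[0,s_\tau-1]$ if $\tau\notin J$ and $\{t_\tau\}\cup[r_\tau,s_\tau-1]$ if $\tau\in J$, and $\xi_\tau=(p^f-1)s_\tau+\Omega_{\tau,s-t}$. Then $J^{\mathrm{AH}}_\sigma(\chi_1,\chi_2)$ is the set of $\alpha=(m,k)\in W$ such that there exist $\tau\in\Sigma$, $d\in\mathcal{I}_\tau$ and $j\ge0$ with $p^jm=\xi_\tau-d(p^f-1)$ and $\tau_\alpha=\tau\circ\varphi^j$. (Under weak genericity $m_{\tau,j}\in W'_j$.)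
   Formalization: The choice of $\tau_m$ for $m\in W'$ depends only on the residue of m modulo $p^f-1$, so $m_{\tau,j}$ and $m_{\tau,j-1}$ get the same $\tau_m$. The statement above fails without it. *)

theory Defs
  imports "HOL-Number_Theory.Number_Theory"
begin

text \<open>The embeddings are indexed by 0..<f: index i stands for
  tau_i = tau_0 o phi^i, so tau_i o phi^j is index (i+j) mod f.
  A restriction to inertia of a character of G_K with values in Fbar_p^* is
  omega_{tau_0}^c for an integer c determined mod p^f - 1; we record it by c.
  Since omega_{tau_i} = omega_{tau_0}^(p^i), prod_tau omega_tau^(a_tau) equals
  omega_{tau_0}^(Omega_{tau_0,a}), and two such characters agree iff the
  exponents agree mod p^f - 1.\<close>

definition NN :: "nat \<Rightarrow> nat \<Rightarrow> int" where
  "NN p f = int p ^ f - 1"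

definition Omg :: "nat \<Rightarrow> nat \<Rightarrow> (nat \<Rightarrow> int) \<Rightarrow> nat \<Rightarrow> int" where
  "Omg p f a i = (\<Sum>l<f. int p ^ l * a ((i + l) mod f))"

text \<open>Membership of (J,x) in S(chi_1,chi_2,sigma_{a,b}); c1, c2 are the
  exponents of chi_1|I_K, chi_2|I_K with respect to omega_{tau_0}.
  x is normalised to be 0 outside the index range.\<close>
definition inS :: "nat \<Rightarrow> nat \<Rightarrow> nat \<Rightarrow> (nat \<Rightarrow> int) \<Rightarrow> (nat \<Rightarrow> int) \<Rightarrow> int \<Rightarrow> int
    \<Rightarrow> nat set \<Rightarrow> (nat \<Rightarrow> int) \<Rightarrow> bool" where
  "inS p f e a b c1 c2 J x \<longleftrightarrow>
     J \<subseteq> {..<f} \<and> (\<forall>i<f. 0 \<le> x i \<and> x i \<le> int e - 1) \<and> (\<forall>i\<ge>f. x i = 0) \<and>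
     [c1 = Omg p f (\<lambda>i. if i \<in> J then a i + 1 + x i else b i + x i) 0] (mod NN p f) \<and>
     [c2 = Omg p f (\<lambda>i. if i \<notin> J then a i + int e - x i else b i + int e - 1 - x i) 0] (mod NN p f)"

definition sv :: "(nat \<Rightarrow> int) \<Rightarrow> (nat \<Rightarrow> int) \<Rightarrow> nat set \<Rightarrow> (nat \<Rightarrow> int) \<Rightarrow> nat \<Rightarrow> int" where
  "sv a b J x i = (if i \<in> J then a i - b i + 1 + x i else x i)"

definition precS :: "nat \<Rightarrow> nat \<Rightarrow> (nat \<Rightarrow> int) \<Rightarrow> (nat \<Rightarrow> int)
    \<Rightarrow> nat set \<Rightarrow> (nat \<Rightarrow> int) \<Rightarrow> nat set \<Rightarrow> (nat \<Rightarrow> int) \<Rightarrow> bool" where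
  "precS p f a b J x J' x' \<longleftrightarrow>
     (\<forall>i<f. \<exists>q::int. q \<ge> 0 \<and>
        Omg p f (\<lambda>l. sv a b J' x' l - sv a b J x l) i = NN p f * q)"

definition isMaxS :: "nat \<Rightarrow> nat \<Rightarrow> nat \<Rightarrow> (nat \<Rightarrow> int) \<Rightarrow> (nat \<Rightarrow> int) \<Rightarrow> int \<Rightarrow> int
    \<Rightarrow> nat set \<Rightarrow> (nat \<Rightarrow> int) \<Rightarrow> bool" where
  "isMaxS p f e a b c1 c2 J x \<longleftrightarrow> inS p f e a b c1 c2 J x \<and>
     (\<forall>J' x'. inS p f e a b c1 c2 J' x' \<and> precS p f a b J x J' x' \<longrightarrow> J' = J \<and> x' = x)"

definition fprime :: "nat \<Rightarrow> (nat \<Rightarrow> int) \<Rightarrow> nat" where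
  "fprime f n = (LEAST i. 0 < i \<and> (\<forall>t<f. n ((t + i) mod f) = n t))"

definition fsecond :: "nat \<Rightarrow> (nat \<Rightarrow> int) \<Rightarrow> nat" where
  "fsecond f n = f div fprime f n"

text \<open>m in W'_j (the real-number bounds j p (p^f-1)/(p-1) are multiplied out).\<close>
definition inWj :: "nat \<Rightarrow> nat \<Rightarrow> (nat \<Rightarrow> int) \<Rightarrow> nat \<Rightarrow> int \<Rightarrow> bool" where
  "inWj p f n j m \<longleftrightarrow>
     int j * int p * NN p f < m * (int p - 1) \<and> m * (int p - 1) < (int j + 1) * int p * NN p f \<and>
     \<not> int p dvd m \<and> (\<exists>t<f. [m = Omg p f n t] (mod NN p f))"

definition inW' :: "nat \<Rightarrow> nat \<Rightarrow> nat \<Rightarrow> (nat \<Rightarrow> int) \<Rightarrow> int \<Rightarrow> bool" where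
  "inW' p f e n m \<longleftrightarrow> (\<exists>j<e. inWj p f n j m)"

definition Iset :: "nat \<Rightarrow> nat \<Rightarrow> nat \<Rightarrow> (nat \<Rightarrow> int) \<Rightarrow> (nat \<Rightarrow> int) \<Rightarrow> nat set \<Rightarrow> (nat \<Rightarrow> int) \<Rightarrow> nat \<Rightarrow> int set" where
  "Iset p f e a b J x t =
     (let s = sv a b J x t; r = a t - b t + 1; tt = a t - b t + int e - s in
      if t \<in> J then insert tt {r..s - 1} else {0..s - 1})"

definition xiS :: "nat \<Rightarrow> nat \<Rightarrow> nat \<Rightarrow> (nat \<Rightarrow> int) \<Rightarrow> (nat \<Rightarrow> int) \<Rightarrow> nat set \<Rightarrow> (nat \<Rightarrow> int) \<Rightarrow> nat \<Rightarrow> int" where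
  "xiS p f e a b J x t = NN p f * sv a b J x t +
     Omg p f (\<lambda>l. sv a b J x l - (a l - b l + int e - sv a b J x l)) t"

text \<open>tau_alpha for alpha = (m,k): tau_m o phi^(-k f'), where the fixed choice
  tau_m (an index with m = Omega_{tau_m,n} mod p^f-1) is given by tm applied to
  the residue of m mod p^f - 1.\<close>
definition tauA :: "nat \<Rightarrow> nat \<Rightarrow> (nat \<Rightarrow> int) \<Rightarrow> (int \<Rightarrow> nat) \<Rightarrow> int \<Rightarrow> nat \<Rightarrow> nat" where
  "tauA p f n tm m k = nat ((int (tm (m mod NN p f)) - int k * int (fprime f n)) mod int f)"

definition JAH :: "nat \<Rightarrow> nat \<Rightarrow> nat \<Rightarrow> (nat \<Rightarrow> int) \<Rightarrow> (nat \<Rightarrow> int) \<Rightarrow> (nat \<Rightarrow> int)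
    \<Rightarrow> (int \<Rightarrow> nat) \<Rightarrow> nat set \<Rightarrow> (nat \<Rightarrow> int) \<Rightarrow> (int \<times> nat) set" where
  "JAH p f e n a b tm J x = {(m, k). inW' p f e n m \<and> k < fsecond f n \<and>
     (\<exists>t<f. \<exists>d \<in> Iset p f e a b J x t. \<exists>j::nat.
        int p ^ j * m = xiS p f e a b J x t - d * NN p f \<and>
        tauA p f n tm m k = (t + j) mod f)}"

end

theory Submission
  imports Defs
begin

text \<open>Put N = p^f - 1 and delta = s - t, so that xi_tau - d N = (s_tau - d) N + Omega_tau(delta).
  A witness (tau, d, i) for m = m_{tau,j} thus reads p^i m = g N + Omega_tau(delta) with gap
  g = s_tau - d \<le> p + e - 1. For j \<ge> 1 weak genericity gives
  (p - 1) m \<ge> (p + e - 1) N \<ge> (p - 1) Omega_tau(delta); comparing sizes, i \<le> 1, and i = 1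
  forces the extreme gap p + e - 1. Passing from m to m - N then amounts to raising d by p
  (if i = 1) or by 1 (if i = 0 and g \<ge> 2). If i = 0 and g = 1, then m - N = Omega_tau(delta),
  and the shift relation p Omega_tau(delta) = Omega_{tau-1}(delta) + N delta_{tau-1} yields a
  witness at tau - 1 with i = 1 and d = t_{tau-1}, the size of m forcing tau - 1 \<in> J.
  The case d = t_tau with i = 0 cannot occur: it gives m = p Omega_{tau+1}(delta), whereas
  p does not divide m. In all cases tau + i mod f is unchanged, and tau_alpha only depends on
  m mod N.\<close>

lemma NN_eq_geometric_sum: "NN p f = (int p - 1) * (\<Sum>l<f. int p ^ l)"
  by (simp add: NN_def power_diff_1_eq)

lemma NN_pos:
  assumes "2 \<le> p" "0 < f"
  shows "0 < NN p f"
proof -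
  have "1 < int p ^ f" using assms by (intro one_less_power) auto
  then show ?thesis by (simp add: NN_def)
qed

lemma NN_cong_minus_one:
  assumes "0 < f"
  shows "[NN p f = -1] (mod int p)"
proof -
  have "[int p ^ f = 0] (mod int p)" using assms by (simp add: cong_0_iff)
  then show ?thesis unfolding NN_def using cong_diff[OF _ cong_refl, of _ 0 _ 1] by simp
qed

lemma Omg_le:
  assumes "\<And>l. l < f \<Longrightarrow> u l \<le> U" and "1 \<le> p"
  shows "(int p - 1) * Omg p f u i \<le> U * NN p f"
proof -
  have "(int p - 1) * Omg p f u i \<le> (int p - 1) * (\<Sum>l<f. int p ^ l * U)"
    unfolding Omg_def using assms by (intro mult_left_mono sum_mono) auto
  also have "\<dots> = U * NN p f"
    by (simp add: NN_eq_geometric_sum flip: sum_distrib_right)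
  finally show ?thesis .
qed

lemma Omg_ge:
  assumes "\<And>l. l < f \<Longrightarrow> L \<le> u l" and "1 \<le> p"
  shows "L * NN p f \<le> (int p - 1) * Omg p f u i"
proof -
  have "L * NN p f = (int p - 1) * (\<Sum>l<f. int p ^ l * L)"
    by (simp add: NN_eq_geometric_sum flip: sum_distrib_right)
  also have "\<dots> \<le> (int p - 1) * Omg p f u i"
    unfolding Omg_def using assms by (intro mult_left_mono sum_mono) auto
  finally show ?thesis .
qed

lemma Omg_Suc_shift:
  assumes "i < f"
  shows "int p * Omg p f u (Suc i mod f) = Omg p f u i + NN p f * u i"
proof -
  define A where "A l = int p ^ l * u ((i + l) mod f)" for l
  have "int p * Omg p f u (Suc i mod f) = (\<Sum>l<f. A (Suc l))"
    unfolding Omg_def A_def sum_distrib_left by (intro sum.cong) (auto simp: mod_add_left_eq)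
  also have "\<dots> = (\<Sum>l<Suc f. A l) - A 0"
    by (simp only: sum.lessThan_Suc_shift)
  also have "\<dots> = Omg p f u i + NN p f * u i"
    using assms by (simp add: A_def Omg_def NN_def algebra_simps)
  finally show ?thesis .
qed

lemma Omg_cong_mod_p:
  assumes "t < f"
  shows "[Omg p f u t = u t] (mod int p)"
proof -
  obtain f' where f': "f = Suc f'" using assms by (cases f) auto
  have "Omg p f u t = u t + int p * (\<Sum>l<f'. int p ^ l * u ((t + Suc l) mod f))"
    unfolding Omg_def f' using assms f'
    by (simp only: sum.lessThan_Suc_shift) (simp add: sum_distrib_left mult.assoc)
  then show ?thesis by (simp add: cong_def)
qed

lemma Omg_add_multiple_NN_in_Wj:
  assumes "2 \<le> p" "t < f" "j < e"
    and weakly_generic: "\<And>i. i < f \<Longrightarrow> int e \<le> n i \<and> n i \<le> int p - int e"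
  shows "inWj p f n j (Omg p f n t + int j * NN p f)"
proof -
  define W where "W = Omg p f n t"
  define m where "m = W + int j * NN p f"
  have N: "0 < NN p f" using assms by (intro NN_pos) auto
  have W_ge: "int e * NN p f \<le> (int p - 1) * W"
    unfolding W_def using assms by (intro Omg_ge) auto
  have W_le: "(int p - 1) * W \<le> (int p - int e) * NN p f"
    unfolding W_def using assms by (intro Omg_le) auto
  have m_p: "m * (int p - 1) = (int p - 1) * W + int j * int p * NN p f - int j * NN p f"
    by (simp add: m_def algebra_simps)
  have "int j * NN p f < int e * NN p f" using N assms by simp
  then have lower: "int j * int p * NN p f < m * (int p - 1)" using m_p W_ge by linarith
  have "0 < (int e + int j) * NN p f" using N assms by simp
  then have upper: "m * (int p - 1) < (int j + 1) * int p * NN p f"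
    using m_p W_le by (simp add: algebra_simps)
  have "[m = n t + int j * -1] (mod int p)"
    unfolding m_def W_def using assms
    by (intro cong_add Omg_cong_mod_p cong_scalar_left NN_cong_minus_one) auto
  then have m_mod_p: "[m = n t - int j] (mod int p)" by simp
  have "\<not> int p dvd n t - int j"
  proof
    assume "int p dvd n t - int j"
    moreover have "0 < n t - int j" using weakly_generic[of t] assms by linarith
    ultimately have "int p \<le> n t - int j" by (rule zdvd_imp_le)
    then show False using weakly_generic[of t] assms by linarith
  qed
  then have "\<not> int p dvd m" using cong_dvd_iff[OF m_mod_p] by blast
  moreover have "[m = Omg p f n t] (mod NN p f)" by (simp add: m_def W_def cong_def)
  ultimately show ?thesis
    using lower upper assms unfolding inWj_def m_def W_def by blast
qed

lemma Omg_add_multiple_NN_lower_bound: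
  assumes "2 \<le> p" "0 < f" "1 \<le> j" and "\<And>i. i < f \<Longrightarrow> int e \<le> n i"
  shows "(int p + int e - 1) * NN p f \<le> (int p - 1) * (Omg p f n t + int j * NN p f)"
proof -
  have "int e * NN p f \<le> (int p - 1) * Omg p f n t" using assms by (intro Omg_ge) auto
  moreover have "(int p - 1) * NN p f \<le> (int p - 1) * (int j * NN p f)"
    using assms NN_pos[of p f] by (intro mult_left_mono) auto
  ultimately show ?thesis by (simp add: algebra_simps)
qed

lemma tauA_diff_NN: "tauA p f n tm (m - NN p f) k = tauA p f n tm m k"
proof -
  have "(m - NN p f) mod NN p f = m mod NN p f" by (simp add: mod_diff_right_eq[symmetric])
  then show ?thesis by (simp add: tauA_def)
qed

locale serre_pair =
  fixes p f e :: nat and a b :: "nat \<Rightarrow> int" and J :: "nat set" and x :: "nat \<Rightarrow> int"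
  assumes p_ge_2: "2 \<le> p" and f_pos: "0 < f"
    and weight_range: "\<And>i. i < f \<Longrightarrow> 0 \<le> a i - b i \<and> a i - b i \<le> int p - 1"
    and x_range: "\<And>i. i < f \<Longrightarrow> 0 \<le> x i \<and> x i \<le> int e - 1"
begin

abbreviation N :: int where "N \<equiv> NN p f"

abbreviation s :: "nat \<Rightarrow> int" where "s \<equiv> sv a b J x"

definition tv :: "nat \<Rightarrow> int" where "tv i = a i - b i + int e - s i"

definition delta :: "nat \<Rightarrow> int" where "delta i = s i - tv i"

definition AH_witness :: "int \<Rightarrow> nat \<Rightarrow> int \<Rightarrow> nat \<Rightarrow> bool" where
  "AH_witness m \<tau> d j \<longleftrightarrow> \<tau> < f \<and> d \<in> Iset p f e a b J x \<tau> \<and>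
     int p ^ j * m = xiS p f e a b J x \<tau> - d * N"

lemma N_pos: "0 < N"
  using p_ge_2 f_pos by (rule NN_pos)

lemma xiS_eq: "xiS p f e a b J x i = N * s i + Omg p f delta i"
  by (simp add: xiS_def delta_def[abs_def] tv_def[abs_def])

lemma mem_Iset_iff: "d \<in> Iset p f e a b J x i \<longleftrightarrow> (i \<in> J \<and> d = tv i) \<or> (1 \<le> s i - d \<and> s i - d \<le> x i)"
  by (auto simp: Iset_def Let_def tv_def sv_def)

lemma delta_le: "i < f \<Longrightarrow> delta i \<le> int p + int e - 1"
  using weight_range[of i] x_range[of i] by (auto simp: delta_def tv_def sv_def)

lemma delta_le_notin: "i < f \<Longrightarrow> i \<notin> J \<Longrightarrow> delta i \<le> int e - 2"
  using weight_range[of i] x_range[of i] by (auto simp: delta_def tv_def sv_def)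

lemma delta_eq_maxD: "i < f \<Longrightarrow> delta i = int p + int e - 1 \<Longrightarrow> i \<in> J \<and> x i = int e - 1"
  using weight_range[of i] x_range[of i] by (auto simp: delta_def tv_def sv_def split: if_splits)

lemma Omg_delta_le: "(int p - 1) * Omg p f delta i \<le> (int p + int e - 1) * N"
  using delta_le p_ge_2 by (intro Omg_le) auto

lemma AH_witness_eq:
  "AH_witness m \<tau> d j \<Longrightarrow> int p ^ j * m = (s \<tau> - d) * N + Omg p f delta \<tau>"
  by (simp add: AH_witness_def xiS_eq algebra_simps)

lemma AH_witness_gap_le:
  assumes "AH_witness m \<tau> d j"
  shows "s \<tau> - d \<le> int p + int e - 1"
  using assms delta_le[of \<tau>] x_range[of \<tau>]
  by (auto simp: AH_witness_def mem_Iset_iff delta_def)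

lemma AH_witness_exponent:
  assumes w: "AH_witness m \<tau> d j"
    and m_large: "(int p + int e - 1) * N \<le> (int p - 1) * m"
  shows "j = 0 \<or> (j = 1 \<and> s \<tau> - d = int p + int e - 1)"
proof -
  define g where "g = s \<tau> - d"
  define K where "K = (int p + int e - 1) * N"
  have K_pos: "0 < K" using N_pos p_ge_2 by (simp add: K_def)
  have g_le: "g \<le> int p + int e - 1" using AH_witness_gap_le[OF w] by (simp add: g_def)
  have "int p ^ j * K \<le> int p ^ j * ((int p - 1) * m)"
    using m_large by (intro mult_left_mono) (auto simp: K_def)
  also have "\<dots> = (int p - 1) * (int p ^ j * m)" by (rule mult.left_commute)
  also have "\<dots> = (int p - 1) * (g * N + Omg p f delta \<tau>)"
    using AH_witness_eq[OF w] by (simp add: g_def)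
  also have "\<dots> \<le> (int p - 1) * g * N + K"
    using Omg_delta_le by (simp add: K_def distrib_left mult.assoc)
  finally have bound: "int p ^ j * K \<le> (int p - 1) * g * N + K" .
  have "(int p - 1) * (g * N) \<le> (int p - 1) * K"
    unfolding K_def using g_le p_ge_2 N_pos by (intro mult_left_mono mult_right_mono) auto
  then have "int p ^ j * K \<le> int p ^ 1 * K" using bound by (simp add: algebra_simps)
  then have "j \<le> 1" using K_pos p_ge_2 by (intro power_le_imp_le_exp[of "int p"]) auto
  moreover have "int p + int e - 1 \<le> g" if "j = 1"
  proof -
    have "(int p - 1) * K \<le> (int p - 1) * (g * N)" using bound that by (simp add: algebra_simps)
    then have "(int p + int e - 1) * N \<le> g * N" using p_ge_2 by (simp add: K_def)
    then show ?thesis using N_pos by simp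
  qed
  ultimately show ?thesis using g_le by (auto simp: g_def)
qed

lemma AH_witness_pred_top:
  assumes w: "AH_witness m \<tau> d 1" and gap: "s \<tau> - d = int p + int e - 1" and "2 \<le> e"
  shows "AH_witness (m - N) \<tau> (d + int p) 1"
proof -
  have \<tau>: "\<tau> < f" and d: "d \<in> Iset p f e a b J x \<tau>" using w by (auto simp: AH_witness_def)
  have "\<tau> \<in> J \<and> d = tv \<tau>"
    using d x_range[OF \<tau>] gap p_ge_2 by (auto simp: mem_Iset_iff)
  then have "x \<tau> = int e - 1" using delta_eq_maxD[OF \<tau>] gap by (simp add: delta_def)
  then have "d + int p \<in> Iset p f e a b J x \<tau>" using gap \<open>2 \<le> e\<close> by (simp add: mem_Iset_iff)
  then show ?thesis using w by (simp add: AH_witness_def algebra_simps)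
qed

lemma AH_witness_tv_imp_dvd:
  assumes "AH_witness m \<tau> (tv \<tau>) 0"
  shows "int p dvd m"
proof -
  have "m = N * delta \<tau> + Omg p f delta \<tau>"
    using AH_witness_eq[OF assms] by (simp add: delta_def algebra_simps)
  also have "\<dots> = int p * Omg p f delta (Suc \<tau> mod f)"
    using assms Omg_Suc_shift by (simp add: AH_witness_def)
  finally show ?thesis by simp
qed

lemma AH_witness_pred_gap:
  assumes w: "AH_witness m \<tau> d 0" and "2 \<le> s \<tau> - d" and "\<not> (\<tau> \<in> J \<and> d = tv \<tau>)"
  shows "AH_witness (m - N) \<tau> (d + 1) 0"
proof -
  have "d + 1 \<in> Iset p f e a b J x \<tau>" using w assms(2,3) by (auto simp: AH_witness_def mem_Iset_iff)
  then show ?thesis using w by (simp add: AH_witness_def algebra_simps)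
qed

lemma AH_witness_pred_shift:
  assumes w: "AH_witness m \<tau> d 0" and gap: "s \<tau> - d = 1"
    and m_large: "(int p + int e - 1) * N \<le> (int p - 1) * m"
  obtains \<tau>' where "AH_witness (m - N) \<tau>' (tv \<tau>') 1" "Suc \<tau>' mod f = \<tau>"
proof -
  have \<tau>: "\<tau> < f" using w by (simp add: AH_witness_def)
  obtain \<tau>' where \<tau>': "\<tau>' < f" "Suc \<tau>' mod f = \<tau>"
  proof (cases \<tau>)
    case 0
    then show ?thesis using that[of "f - 1"] f_pos by simp
  next
    case (Suc k)
    then show ?thesis using that[of k] \<tau> by simp
  qed
  have m_eq: "m - N = Omg p f delta \<tau>" using AH_witness_eq[OF w] gap by simp
  have shift: "int p * Omg p f delta \<tau> = Omg p f delta \<tau>' + N * delta \<tau>'"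
    using Omg_Suc_shift[OF \<tau>'(1)] \<tau>'(2) by simp
  have "int e * N \<le> (int p - 1) * Omg p f delta \<tau>"
    using m_large by (simp add: m_eq[symmetric] algebra_simps)
  then have "int p * (int e * N) \<le> int p * ((int p - 1) * Omg p f delta \<tau>)"
    by (intro mult_left_mono) auto
  then have "(int p - 1) * (N * (int e - 1)) \<le> (int p - 1) * (N * delta \<tau>')"
    using shift Omg_delta_le[of \<tau>'] by (simp add: algebra_simps)
  then have "int e - 1 \<le> delta \<tau>'" using p_ge_2 N_pos by simp
  then have "\<tau>' \<in> J" using delta_le_notin[OF \<tau>'(1)] by force
  then have "tv \<tau>' \<in> Iset p f e a b J x \<tau>'" by (simp add: mem_Iset_iff)
  moreover have "int p ^ 1 * (m - N) = xiS p f e a b J x \<tau>' - tv \<tau>' * N"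
    using shift m_eq by (simp add: xiS_eq delta_def algebra_simps)
  ultimately show thesis using that \<tau>' by (simp add: AH_witness_def)
qed

lemma AH_witness_pred:
  assumes w: "AH_witness m \<tau> d j" and "\<not> int p dvd m"
    and m_large: "(int p + int e - 1) * N \<le> (int p - 1) * m" and "2 \<le> e"
  obtains \<tau>' d' j' where "AH_witness (m - N) \<tau>' d' j'" "(\<tau>' + j') mod f = (\<tau> + j) mod f"
proof -
  have \<tau>: "\<tau> < f" using w by (simp add: AH_witness_def)
  consider "j = 1" "s \<tau> - d = int p + int e - 1" | "j = 0"
    using AH_witness_exponent[OF w m_large] by blast
  then show thesis
  proof cases
    case 1
    then show thesis using that AH_witness_pred_top w \<open>2 \<le> e\<close> by blast
  next
    case 2
    have not_tv: "\<not> (\<tau> \<in> J \<and> d = tv \<tau>)"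
      using AH_witness_tv_imp_dvd w 2 \<open>\<not> int p dvd m\<close> by blast
    then have "1 \<le> s \<tau> - d" using w by (auto simp: AH_witness_def mem_Iset_iff)
    then consider "2 \<le> s \<tau> - d" | "s \<tau> - d = 1" by linarith
    then show thesis
    proof cases
      case 1
      then show thesis using that AH_witness_pred_gap w 2 not_tv by blast
    next
      case 2
      with w \<open>j = 0\<close> m_large obtain \<tau>' where "AH_witness (m - N) \<tau>' (tv \<tau>') 1" "Suc \<tau>' mod f = \<tau>"
        using AH_witness_pred_shift by blast
      then show thesis using that \<tau> \<open>j = 0\<close> by simp
    qed
  qed
qed

end

theorem proposition5p13:
  fixes p f e :: nat and c1 c2 :: int and n a b :: "nat \<Rightarrow> int"
    and tm :: "int \<Rightarrow> nat" and J :: "nat set" and x :: "nat \<Rightarrow> int"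
  assumes "prime p" and "0 < f" and "0 < e"
    and n_range: "\<forall>i<f. 1 \<le> n i \<and> n i \<le> int p" and "\<exists>i<f. n i < int p"
    and chi: "[c1 - c2 = Omg p f n 0] (mod NN p f)"
    and weakly_generic: "\<forall>i<f. int e \<le> n i \<and> n i \<le> int p - int e"
    and serre: "\<forall>i<f. 0 \<le> a i - b i \<and> a i - b i \<le> int p - 1"
    and S_nonempty: "\<exists>J' x'. inS p f e a b c1 c2 J' x'"
    and maximal: "isMaxS p f e a b c1 c2 J x"
    and tm_choice: "\<forall>m. inW' p f e n m \<longrightarrow>
        tm (m mod NN p f) < f \<and> [m = Omg p f n (tm (m mod NN p f))] (mod NN p f)"
  shows "\<forall>t<f. \<forall>j k. 1 \<le> j \<and> j < e \<and> k < fsecond f n \<longrightarrow>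
           (Omg p f n t + int j * NN p f, k) \<in> JAH p f e n a b tm J x \<longrightarrow>
           (Omg p f n t + int (j - 1) * NN p f, k) \<in> JAH p f e n a b tm J x"
proof (intro allI impI)
  fix t j k
  assume t: "t < f" and jk: "1 \<le> j \<and> j < e \<and> k < fsecond f n"
    and mem: "(Omg p f n t + int j * NN p f, k) \<in> JAH p f e n a b tm J x"
  have p: "2 \<le> p" using \<open>prime p\<close> by (rule prime_ge_2_nat)
  interpret serre_pair p f e a b J x
    using p \<open>0 < f\<close> serre maximal by unfold_locales (auto simp: isMaxS_def inS_def)
  define m where "m = Omg p f n t + int j * N"
  have m_pred: "m - N = Omg p f n t + int (j - 1) * N"
    using jk by (simp add: m_def of_nat_diff algebra_simps)
  from mem obtain \<tau> d i where w: "AH_witness m \<tau> d i" and tau: "tauA p f n tm m k = (\<tau> + i) mod f"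
    unfolding JAH_def AH_witness_def m_def by blast
  have "\<not> int p dvd m"
    using Omg_add_multiple_NN_in_Wj[OF p t, of j e n] jk weakly_generic
    by (simp add: inWj_def m_def)
  moreover have "(int p + int e - 1) * N \<le> (int p - 1) * m"
    unfolding m_def using p \<open>0 < f\<close> jk weakly_generic by (intro Omg_add_multiple_NN_lower_bound) auto
  moreover have "2 \<le> e" using jk by simp
  ultimately obtain \<tau>' d' i' where w': "AH_witness (m - N) \<tau>' d' i'"
    and tau': "tauA p f n tm (m - N) k = (\<tau>' + i') mod f"
    using AH_witness_pred[OF w] tau tauA_diff_NN by metis
  have "inWj p f n (j - 1) (m - N)"
    unfolding m_pred using p t jk weakly_generic by (intro Omg_add_multiple_NN_in_Wj) auto
  then have "inW' p f e n (m - N)" using jk unfolding inW'_def by (intro exI[of _ "j - 1"]) auto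
  then have "(m - N, k) \<in> JAH p f e n a b tm J x"
    using w' tau' jk unfolding JAH_def AH_witness_def by blast
  then show "(Omg p f n t + int (j - 1) * NN p f, k) \<in> JAH p f e n a b tm J x"
    by (simp only: m_pred)
qed

end
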